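(* Let $p\in(0,\infty)$ and let $f:\mathcal{W}_p(\mathcal{X})\to\mathcal{W}_p(\mathcal{X})$ be an isometric embedding, i.e. $W_p(f(\mu),f(\nu))=W_p(\mu,\nu)$ for all $\mu,\nu\in\mathcal{P}(\mathcal{X})$. Then there exists a unique family of measures $\Phi=(\varphi_{x,t})_{x\in\mathcal{X},\,t\in(0,1]}\in\mathcal{M}(\mathcal{X})^{\mathcal{X}\times(0,1]}$ satisfying (a) for all $x\neq y$: $S_{\varphi_{x,1}}\cap S_{\varphi_{y,1}}=\emptyset$; (b) for all $x\in\mathcal{X}$ and $0<t\le 1$: $\varphi_{x,t}(\mathcal{X})=t$; (c) for all $x\in\mathcal{X}$ and $0<s<t\le 1$: $\varphi_{x,s}\le\varphi_{x,t}$; and generating $f$ via $$f(\mu)=\sum_{x\in S_\mu}\varphi_{x,\mu(\{x\})}\qquad\text{for all }\mu\in\mathcal{P}(\mathcal{X}).$$ Conversely, every $\mathcal{X}\times(0,1]$-indexed family of measures in $\mathcal{M}(\mathcal{X})$ satisfying (a)–(c) generates an isometric embedding of $\mathcal{W}_p(\mathcal{X})$ via the formula $f(\mu)=\sum_{x\in S_\mu}\varphi_{x,\mu(\{x\})}$.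
   Context: Let $X$ be a countable set with at least two elements, equipped with the discrete metric $\rho$ ($\rho(x,y)=1$ if $x\neq y$, $\rho(x,x)=0$); write $\mathcal{X}=(X,\rho)$. $\mathcal{P}(\mathcal{X})$ and $\mathcal{M}(\mathcal{X})$ denote the probability measures and nonnegative finite measures on the power set of $\mathcal{X}$. For $\mu\in\mathcal{M}(\mathcal{X})$, $S_\mu=\{x\in\mathcal{X}:\mu(\{x\})>0\}$ is its support. For measures, $\alpha\le\beta$ means $\alpha(A)\le\beta(A)$ for all $A\subseteq\mathcal{X}$. For $\mu,\nu\in\mathcal{P}(\mathcal{X})$, a coupling is a probability measure $\pi$ on $\mathcal{X}^2$ with marginals $\mu,\nu$, and $W_p(\mu,\nu)=\big(\inf_\pi\int\rho^p\,d\pi\big)^{1/p}$ for $p\ge1$, $W_p(\mu,\nu)=\inf_\pi\int\rho^p\,d\pi$ for $0<p<1$. $\mathcal{W}_p(\mathcal{X})$ is the metric space $(\mathcal{P}(\mathcal{X}),W_p)$. An isometric embedding is a (not necessarily surjective) distance-preserving self-map of $\mathcal{W}_p(\mathcal{X})$. *)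

theory Defs
  imports "HOL-Probability.Probability"
begin

text \<open>The countable set X is the universe of a countable type 'a; probability measures on
  its power set are exactly the pmfs on 'a.  Finite nonnegative measures on the power set
  are represented by their (nonnegative, summable) point-mass functions 'a \<Rightarrow> real;
  the measure of a set A is the sum of the point masses over A.\<close>

definition rho :: "'a \<Rightarrow> 'a \<Rightarrow> real" where
  "rho x y = (if x = y then 0 else 1)"

definition is_coupling :: "'a pmf \<Rightarrow> 'a pmf \<Rightarrow> ('a \<times> 'a) pmf \<Rightarrow> bool" where
  "is_coupling \<mu> \<nu> \<pi> \<longleftrightarrow> map_pmf fst \<pi> = \<mu> \<and> map_pmf snd \<pi> = \<nu>"

definition transport_cost :: "real \<Rightarrow> ('a \<times> 'a) pmf \<Rightarrow> real" where
  "transport_cost p \<pi> = measure_pmf.expectation \<pi> (\<lambda>(x, y). rho x y powr p)"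

definition Wp :: "real \<Rightarrow> 'a pmf \<Rightarrow> 'a pmf \<Rightarrow> real" where
  "Wp p \<mu> \<nu> =
     (let c = Inf {transport_cost p \<pi> | \<pi>. is_coupling \<mu> \<nu> \<pi>}
      in if p \<ge> 1 then c powr (1 / p) else c)"

definition isometric_embedding :: "real \<Rightarrow> ('a pmf \<Rightarrow> 'a pmf) \<Rightarrow> bool" where
  "isometric_embedding p f \<longleftrightarrow> (\<forall>\<mu> \<nu>. Wp p (f \<mu>) (f \<nu>) = Wp p \<mu> \<nu>)"

definition finite_meas :: "('a \<Rightarrow> real) \<Rightarrow> bool" where
  "finite_meas \<alpha> \<longleftrightarrow> (\<forall>x. \<alpha> x \<ge> 0) \<and> \<alpha> summable_on UNIV"

definition meas :: "('a \<Rightarrow> real) \<Rightarrow> 'a set \<Rightarrow> real" where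
  "meas \<alpha> A = (\<Sum>\<^sub>\<infinity>x\<in>A. \<alpha> x)"

definition supp :: "('a \<Rightarrow> real) \<Rightarrow> 'a set" where
  "supp \<alpha> = {x. meas \<alpha> {x} > 0}"

definition meas_le :: "('a \<Rightarrow> real) \<Rightarrow> ('a \<Rightarrow> real) \<Rightarrow> bool" where
  "meas_le \<alpha> \<beta> \<longleftrightarrow> (\<forall>A. meas \<alpha> A \<le> meas \<beta> A)"

text \<open>Admissible families \<Phi> x t, indexed by x \<in> X and t \<in> (0,1] (values outside are irrelevant).\<close>
definition admissible_family :: "('a \<Rightarrow> real \<Rightarrow> 'a \<Rightarrow> real) \<Rightarrow> bool" where
  "admissible_family \<Phi> \<longleftrightarrow>
     (\<forall>x. \<forall>t\<in>{0<..1}. finite_meas (\<Phi> x t)) \<and>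
     (\<forall>x y. x \<noteq> y \<longrightarrow> supp (\<Phi> x 1) \<inter> supp (\<Phi> y 1) = {}) \<and>
     (\<forall>x. \<forall>t\<in>{0<..1}. meas (\<Phi> x t) UNIV = t) \<and>
     (\<forall>x s t. 0 < s \<and> s < t \<and> t \<le> 1 \<longrightarrow> meas_le (\<Phi> x s) (\<Phi> x t))"

definition generates :: "('a \<Rightarrow> real \<Rightarrow> 'a \<Rightarrow> real) \<Rightarrow> ('a pmf \<Rightarrow> 'a pmf) \<Rightarrow> bool" where
  "generates \<Phi> f \<longleftrightarrow>
     (\<forall>\<mu> A. measure_pmf.prob (f \<mu>) A =
        (\<Sum>\<^sub>\<infinity>x\<in>{x. measure_pmf.prob \<mu> {x} > 0}. meas (\<Phi> x (measure_pmf.prob \<mu> {x})) A))"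

end

theory Submission
  imports Defs
begin

text \<open>For the discrete metric rho powr p = rho, so the cost of a coupling is the mass it puts
  off the diagonal, and the maximal coupling shows that W_p(\<mu>, \<nu>) is a strictly increasing
  function of 1 - overlap \<mu> \<nu>, where overlap \<mu> \<nu> = \<Sum>_a min (\<mu>{a}) (\<nu>{a}).  Isometric
  embeddings are therefore exactly the overlap-preserving maps.

  For such an f the measures f(\<delta>_x) have pairwise disjoint supports, f(\<mu>) is carried by their
  union, and the overlap of f(\<mu>) with f(\<delta>_x) is \<mu>{x}.  Comparing f(\<mu>) and f(\<nu>) block by
  block shows that the part of f(\<mu>) on the support of f(\<delta>_x) is monotone in \<mu>{x}, hence a
  function \<phi>_{x,\<mu>{x}} of \<mu>{x} alone; any generating family must agree with it on every block.
  Conversely, for an admissible family the \<phi>_{x,t} with different x have disjoint supports, so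
  min (f(\<mu>), f(\<nu>)) = \<Sum>_x \<phi>_{x, min (\<mu>{x}) (\<nu>{x})}, whose mass is overlap \<mu> \<nu>.\<close>

section \<open>Infinite sums of nonnegative reals\<close>

lemma summable_on_pmf: "pmf \<mu> summable_on A"
  using abs_summable_summable abs_summable_equivalent pmf_abs_summable by blast

lemma measure_pmf_conv_infsum: "measure_pmf.prob \<mu> A = (\<Sum>\<^sub>\<infinity>a\<in>A. pmf \<mu> a)"
  by (simp add: measure_pmf_conv_infsetsum infsetsum_infsum pmf_abs_summable)

lemma infsum_pmf_UNIV: "(\<Sum>\<^sub>\<infinity>a. pmf \<mu> a) = 1"
  using measure_pmf_conv_infsum[of \<mu> UNIV] by simp

lemma has_sum_pmf_UNIV: "(pmf \<mu> has_sum 1) UNIV"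
  using has_sum_iff infsum_pmf_UNIV summable_on_pmf by blast

lemma pmf_embed_pmf_real:
  fixes g :: "'a \<Rightarrow> real"
  assumes nonneg: "\<And>x. g x \<ge> 0" and "g summable_on UNIV" and "(\<Sum>\<^sub>\<infinity>x. g x) = 1"
  shows "pmf (embed_pmf g) = g"
proof
  fix x
  have "Infinite_Set_Sum.abs_summable_on g UNIV"
    using assms(2) abs_summable_equivalent summable_on_iff_abs_summable_on_real by blast
  then have "(\<integral>\<^sup>+x. ennreal (g x) \<partial>count_space UNIV) = 1"
    using assms by (simp add: nn_integral_conv_infsetsum infsetsum_infsum)
  then show "pmf (embed_pmf g) x = g x" using pmf_embed_pmf[of g] nonneg by blast
qed

lemma infsum_single_nonzero:
  assumes "\<And>z. z \<in> A \<Longrightarrow> z \<noteq> x \<Longrightarrow> g z = 0"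
  shows "infsum g A = (if x \<in> A then g x else 0)"
proof -
  have "infsum g A = infsum g (A \<inter> {x})"
    by (rule infsum_cong_neutral) (use assms in auto)
  then show ?thesis by (cases "x \<in> A") auto
qed

lemma eq_if_le_and_infsum_ge:
  fixes f g :: "'b \<Rightarrow> real"
  assumes "f summable_on A" "g summable_on A" "\<And>z. z \<in> A \<Longrightarrow> f z \<le> g z"
    and "infsum g A \<le> infsum f A" and "x \<in> A"
  shows "f x = g x"
proof (rule ccontr)
  assume "f x \<noteq> g x"
  with assms(3,5) have "f x < g x" by force
  then have "infsum f A < infsum g A"
    using has_sum_strict_mono[OF has_sum_infsum[OF assms(1)] has_sum_infsum[OF assms(2)]] assms(3,5)
    by blast
  with assms(4) show False by simp
qed

lemma
  fixes F :: "'x \<Rightarrow> 'b \<Rightarrow> real"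
  assumes nonneg: "\<And>x a. F x a \<ge> 0" and rows: "\<And>x. F x summable_on UNIV"
    and row_sums: "(\<lambda>x. \<Sum>\<^sub>\<infinity>a. F x a) summable_on UNIV"
  shows summable_on_infsum_nonneg: "(\<lambda>a. \<Sum>\<^sub>\<infinity>x. F x a) summable_on A"
    and infsum_swap_nonneg: "(\<Sum>\<^sub>\<infinity>a\<in>A. \<Sum>\<^sub>\<infinity>x. F x a) = (\<Sum>\<^sub>\<infinity>x. \<Sum>\<^sub>\<infinity>a\<in>A. F x a)"
proof -
  have "(\<lambda>(x, a). F x a) summable_on UNIV \<times> UNIV"
    by (rule summable_on_SigmaI[where g = "\<lambda>x. \<Sum>\<^sub>\<infinity>a. F x a"])
      (auto intro: has_sum_infsum rows row_sums nonneg)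
  then have sm: "(\<lambda>(x, a). F x a) summable_on UNIV \<times> A"
    by (rule summable_on_subset_banach) auto
  then have "(\<lambda>(a, x). F x a) summable_on A \<times> UNIV"
    by (subst (asm) summable_on_swap) (simp add: case_prod_unfold)
  then show "(\<lambda>a. \<Sum>\<^sub>\<infinity>x. F x a) summable_on A"
    using summable_on_Sigma_banach[of "\<lambda>a x. F x a" A "\<lambda>_. UNIV"] by simp
  show "(\<Sum>\<^sub>\<infinity>a\<in>A. \<Sum>\<^sub>\<infinity>x. F x a) = (\<Sum>\<^sub>\<infinity>x. \<Sum>\<^sub>\<infinity>a\<in>A. F x a)"
    using infsum_swap_banach[OF sm] by simp
qed

section \<open>The Wasserstein distance on a discrete space\<close>

definition overlap :: "'a pmf \<Rightarrow> 'a pmf \<Rightarrow> real" where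
  "overlap \<mu> \<nu> = (\<Sum>\<^sub>\<infinity>a. min (pmf \<mu> a) (pmf \<nu> a))"

lemma summable_on_min_pmf: "(\<lambda>a. min (pmf \<mu> a) (pmf \<nu> a)) summable_on A"
  by (rule summable_on_comparison_test[OF summable_on_pmf[of \<mu>]]) auto

lemma overlap_nonneg: "overlap \<mu> \<nu> \<ge> 0"
  unfolding overlap_def by (rule infsum_nonneg) auto

lemma overlap_le_1: "overlap \<mu> \<nu> \<le> 1"
proof -
  have "overlap \<mu> \<nu> \<le> (\<Sum>\<^sub>\<infinity>a. pmf \<mu> a)"
    unfolding overlap_def by (rule infsum_mono[OF summable_on_min_pmf summable_on_pmf]) auto
  then show ?thesis by (simp add: infsum_pmf_UNIV)
qed

lemma overlap_return_pmf: "overlap \<mu> (return_pmf x) = pmf \<mu> x"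
proof -
  have "overlap \<mu> (return_pmf x) = min (pmf \<mu> x) 1"
    unfolding overlap_def pmf_return
    by (subst infsum_single_nonzero[where x = x]) (auto simp: indicator_def)
  then show ?thesis by (simp add: pmf_le_1)
qed

lemma ex_pmf_scaled:
  fixes g :: "'a \<Rightarrow> real"
  assumes nonneg: "\<And>x. g x \<ge> 0" and sum: "(g has_sum c) UNIV"
  shows "\<exists>q. \<forall>x. c * pmf q x = g x"
proof (cases "c = 0")
  case True
  then have "g x = 0" for x
    using nonneg_infsum_le_0D[of g UNIV] nonneg sum by (simp add: has_sum_iff)
  then show ?thesis using True by simp
next
  case False
  have "pmf (embed_pmf (\<lambda>x. g x / c)) = (\<lambda>x. g x / c)"
  proof (rule pmf_embed_pmf_real)
    show "g x / c \<ge> 0" for x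
      using nonneg has_sum_nonneg[OF sum] by simp
    show "(\<lambda>x. g x / c) summable_on UNIV" "(\<Sum>\<^sub>\<infinity>x. g x / c) = 1"
      using has_sum_divide_const[OF sum, of c] False by (simp_all add: has_sum_iff)
  qed
  then have "\<forall>x. c * pmf (embed_pmf (\<lambda>x. g x / c)) x = g x"
    using False by simp
  then show ?thesis by blast
qed

lemma summable_on_pmf_diag: "(\<lambda>a. pmf \<pi> (a, a)) summable_on UNIV"
proof -
  have "pmf \<pi> summable_on range (\<lambda>a. (a, a))" by (rule summable_on_pmf)
  then show ?thesis by (subst (asm) summable_on_reindex) (auto simp: inj_on_def o_def)
qed

lemma transport_cost_discrete:
  assumes "p > 0"
  shows "transport_cost p \<pi> = 1 - (\<Sum>\<^sub>\<infinity>a. pmf \<pi> (a, a))"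
proof -
  let ?D = "{z :: 'a \<times> 'a. fst z = snd z}"
  have "(\<lambda>(x, y). rho x y powr p) = indicator (- ?D)"
    using assms by (auto simp: rho_def fun_eq_iff split: split_indicator)
  then have "transport_cost p \<pi> = measure_pmf.prob \<pi> (- ?D)"
    unfolding transport_cost_def by simp
  also have "\<dots> = 1 - measure_pmf.prob \<pi> ?D"
    using measure_pmf.prob_compl[of ?D \<pi>] by (simp add: Compl_eq_Diff_UNIV)
  also have "?D = range (\<lambda>a. (a, a))" by auto
  also have "measure_pmf.prob \<pi> \<dots> = (\<Sum>\<^sub>\<infinity>a. pmf \<pi> (a, a))"
    by (simp add: measure_pmf_conv_infsum infsum_reindex inj_on_def o_def)
  finally show ?thesis .
qed

lemma pmf_diag_le_coupling:
  assumes "is_coupling \<mu> \<nu> \<pi>"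
  shows "pmf \<pi> (a, a) \<le> min (pmf \<mu> a) (pmf \<nu> a)"
proof -
  have "pmf \<pi> (a, a) \<le> measure_pmf.prob \<pi> (fst -` {a})"
    and "pmf \<pi> (a, a) \<le> measure_pmf.prob \<pi> (snd -` {a})"
    unfolding measure_pmf_single[symmetric]
    by (auto intro: measure_pmf.finite_measure_mono)
  then show ?thesis using assms by (simp add: is_coupling_def pmf_map[symmetric])
qed

lemma diag_le_overlap:
  assumes "is_coupling \<mu> \<nu> \<pi>"
  shows "(\<Sum>\<^sub>\<infinity>a. pmf \<pi> (a, a)) \<le> overlap \<mu> \<nu>"
  unfolding overlap_def
  by (rule infsum_mono[OF summable_on_pmf_diag summable_on_min_pmf])
    (rule pmf_diag_le_coupling[OF assms])

text \<open>The maximal coupling: with probability overlap \<mu> \<nu> draw one point from the normalised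
  common part min \<mu> \<nu> for both coordinates, otherwise draw the coordinates independently from
  the normalised residuals \<mu> - min \<mu> \<nu> and \<nu> - min \<mu> \<nu>.\<close>
lemma maximal_coupling_exists:
  "\<exists>\<pi>. is_coupling \<mu> \<nu> \<pi> \<and> overlap \<mu> \<nu> \<le> (\<Sum>\<^sub>\<infinity>a. pmf \<pi> (a, a))"
proof -
  define c where "c = overlap \<mu> \<nu>"
  define m where "m a = min (pmf \<mu> a) (pmf \<nu> a)" for a
  have c: "0 \<le> c" "c \<le> 1" using overlap_nonneg overlap_le_1 by (auto simp: c_def)
  have m_sum: "(m has_sum c) UNIV"
    unfolding m_def c_def overlap_def by (rule has_sum_infsum[OF summable_on_min_pmf])
  have residual: "\<exists>R. \<forall>a. (1 - c) * pmf R a = pmf \<rho> a - m a"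
    if "\<And>a. m a \<le> pmf \<rho> a" for \<rho>
    using ex_pmf_scaled[of "\<lambda>a. pmf \<rho> a - m a"] that
      has_sum_add[OF has_sum_pmf_UNIV has_sum_uminusI[OF m_sum]] by simp
  obtain M where M: "\<And>a. c * pmf M a = m a"
    using ex_pmf_scaled[OF _ m_sum] by (force simp: m_def)
  obtain R1 where R1: "\<And>a. (1 - c) * pmf R1 a = pmf \<mu> a - m a"
    using residual[of \<mu>] by (auto simp: m_def)
  obtain R2 where R2: "\<And>a. (1 - c) * pmf R2 a = pmf \<nu> a - m a"
    using residual[of \<nu>] by (auto simp: m_def)
  define \<pi> where "\<pi> = bernoulli_pmf c \<bind> (\<lambda>b. if b then map_pmf (\<lambda>x. (x, x)) M else pair_pmf R1 R2)"
  have "map_pmf fst \<pi> = bernoulli_pmf c \<bind> (\<lambda>b. if b then M else R1)"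
    unfolding \<pi>_def map_bind_pmf by (rule bind_pmf_cong) (auto simp: map_pmf_comp map_fst_pair_pmf)
  also have "\<dots> = \<mu>"
    by (rule pmf_eqI) (use c M R1 in \<open>auto simp: pmf_bind algebra_simps\<close>)
  finally have fst: "map_pmf fst \<pi> = \<mu>" .
  have "map_pmf snd \<pi> = bernoulli_pmf c \<bind> (\<lambda>b. if b then M else R2)"
    unfolding \<pi>_def map_bind_pmf by (rule bind_pmf_cong) (auto simp: map_pmf_comp map_snd_pair_pmf)
  also have "\<dots> = \<nu>"
    by (rule pmf_eqI) (use c M R2 in \<open>auto simp: pmf_bind algebra_simps\<close>)
  finally have snd: "map_pmf snd \<pi> = \<nu>" .
  have "m a \<le> pmf \<pi> (a, a)" for a
  proof -
    have "pmf \<pi> (a, a) = c * pmf M a + (1 - c) * pmf (pair_pmf R1 R2) (a, a)"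
      unfolding \<pi>_def using c pmf_map_inj'[of "\<lambda>x. (x, x)" M a]
      by (simp add: pmf_bind inj_on_def mult.commute)
    then show ?thesis using c M[of a] by simp
  qed
  then have "overlap \<mu> \<nu> \<le> (\<Sum>\<^sub>\<infinity>a. pmf \<pi> (a, a))"
    unfolding overlap_def
    by (intro infsum_mono[OF summable_on_min_pmf summable_on_pmf_diag]) (simp add: m_def)
  with fst snd show ?thesis unfolding is_coupling_def by blast
qed

lemma Wp_discrete:
  assumes "p > 0"
  shows "Wp p \<mu> \<nu> = (if p \<ge> 1 then (1 - overlap \<mu> \<nu>) powr (1 / p) else 1 - overlap \<mu> \<nu>)"
proof -
  obtain \<pi> where \<pi>: "is_coupling \<mu> \<nu> \<pi>" "overlap \<mu> \<nu> \<le> (\<Sum>\<^sub>\<infinity>a. pmf \<pi> (a, a))"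
    using maximal_coupling_exists by blast
  have "Inf {transport_cost p \<pi> | \<pi>. is_coupling \<mu> \<nu> \<pi>} = 1 - overlap \<mu> \<nu>"
  proof (rule cInf_eq_minimum)
    show "1 - overlap \<mu> \<nu> \<in> {transport_cost p \<pi> | \<pi>. is_coupling \<mu> \<nu> \<pi>}"
      using \<pi> diag_le_overlap[OF \<pi>(1)] transport_cost_discrete[OF assms, of \<pi>]
      by (intro CollectI exI[of _ \<pi>]) simp
  next
    fix x assume "x \<in> {transport_cost p \<pi> | \<pi>. is_coupling \<mu> \<nu> \<pi>}"
    then obtain \<pi>' where "is_coupling \<mu> \<nu> \<pi>'" "x = transport_cost p \<pi>'" by blast
    then show "1 - overlap \<mu> \<nu> \<le> x"
      using diag_le_overlap[of \<mu> \<nu> \<pi>'] transport_cost_discrete[OF assms, of \<pi>'] by simp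
  qed
  then show ?thesis unfolding Wp_def Let_def by simp
qed

lemma isometric_embedding_iff_overlap:
  assumes "p > 0"
  shows "isometric_embedding p f \<longleftrightarrow> (\<forall>\<mu> \<nu>. overlap (f \<mu>) (f \<nu>) = overlap \<mu> \<nu>)"
proof -
  have "(if p \<ge> 1 then x powr (1 / p) else x) = (if p \<ge> 1 then y powr (1 / p) else y) \<longleftrightarrow> x = y"
    if "x \<ge> 0" "y \<ge> 0" for x y :: real
    using that assms by (auto simp: powr_def)
  then show ?thesis
    unfolding isometric_embedding_def Wp_discrete[OF assms]
    by (smt (verit) overlap_le_1)
qed

section \<open>Maps generated by admissible families\<close>

lemma meas_singleton [simp]: "meas \<alpha> {x} = \<alpha> x"
  by (simp add: meas_def)

locale admissible =
  fixes \<Phi> :: "'a \<Rightarrow> real \<Rightarrow> 'a \<Rightarrow> real"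
  assumes admissible: "admissible_family \<Phi>"
begin

lemma family_nonneg: "0 < t \<Longrightarrow> t \<le> 1 \<Longrightarrow> \<Phi> x t a \<ge> 0"
  using admissible unfolding admissible_family_def finite_meas_def by auto

lemma family_summable: "0 < t \<Longrightarrow> t \<le> 1 \<Longrightarrow> \<Phi> x t summable_on UNIV"
  using admissible unfolding admissible_family_def finite_meas_def by auto

lemma family_mass: "0 < t \<Longrightarrow> t \<le> 1 \<Longrightarrow> (\<Sum>\<^sub>\<infinity>a. \<Phi> x t a) = t"
  using admissible unfolding admissible_family_def meas_def by auto

lemma family_mono: "0 < s \<Longrightarrow> s \<le> t \<Longrightarrow> t \<le> 1 \<Longrightarrow> \<Phi> x s a \<le> \<Phi> x t a"
proof (cases "s = t")
  case False
  assume "0 < s" "s \<le> t" "t \<le> 1"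
  with False have "meas_le (\<Phi> x s) (\<Phi> x t)"
    using admissible unfolding admissible_family_def by auto
  then show ?thesis unfolding meas_le_def by (metis meas_singleton)
qed simp

lemma family_disjoint:
  assumes "x \<noteq> y"
  shows "\<Phi> x 1 a = 0 \<or> \<Phi> y 1 a = 0"
proof -
  have "a \<notin> supp (\<Phi> x 1) \<inter> supp (\<Phi> y 1)"
    using admissible assms unfolding admissible_family_def by blast
  then show ?thesis
    using family_nonneg[of 1 x a] family_nonneg[of 1 y a] by (auto simp: supp_def)
qed

lemma family_eq_0_if_family_1_eq_0: "\<Phi> x 1 a = 0 \<Longrightarrow> 0 < t \<Longrightarrow> t \<le> 1 \<Longrightarrow> \<Phi> x t a = 0"
  using family_mono[of t 1 x a] family_nonneg[of t x a] by simp

text \<open>Extending the family by the zero measure at t = 0 allows summing over all of X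
  instead of over the support of \<mu>.\<close>
definition \<psi> :: "'a \<Rightarrow> real \<Rightarrow> 'a \<Rightarrow> real" where
  "\<psi> x t = (if 0 < t then \<Phi> x t else (\<lambda>_. 0))"

lemma \<psi>_nonneg: "t \<le> 1 \<Longrightarrow> \<psi> x t a \<ge> 0"
  by (simp add: \<psi>_def family_nonneg)

lemma \<psi>_summable: "t \<le> 1 \<Longrightarrow> \<psi> x t summable_on UNIV"
  by (cases "0 < t") (simp_all add: \<psi>_def family_summable)

lemma \<psi>_mass: "0 \<le> t \<Longrightarrow> t \<le> 1 \<Longrightarrow> (\<Sum>\<^sub>\<infinity>a. \<psi> x t a) = t"
  by (cases "0 < t") (simp_all add: \<psi>_def family_mass)

lemma \<psi>_mono: "s \<le> t \<Longrightarrow> t \<le> 1 \<Longrightarrow> \<psi> x s a \<le> \<psi> x t a"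
  by (auto simp: \<psi>_def intro: family_mono family_nonneg)

lemma min_\<psi>: "s \<le> 1 \<Longrightarrow> t \<le> 1 \<Longrightarrow> min (\<psi> x s a) (\<psi> x t a) = \<psi> x (min s t) a"
  using \<psi>_mono[of s t x a] \<psi>_mono[of t s x a] by (auto simp: min_def)

lemma ex_family_owner: "\<exists>x\<^sub>0. \<forall>x t. x \<noteq> x\<^sub>0 \<longrightarrow> t \<le> 1 \<longrightarrow> \<psi> x t a = 0"
proof -
  have "\<psi> x t a = 0" if "\<Phi> x 1 a = 0" "t \<le> 1" for x t
    using that family_eq_0_if_family_1_eq_0 by (simp add: \<psi>_def)
  then show ?thesis using family_disjoint by metis
qed

definition superpose :: "('a \<Rightarrow> real) \<Rightarrow> 'a \<Rightarrow> real" where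
  "superpose w a = (\<Sum>\<^sub>\<infinity>x. \<psi> x (w x) a)"

lemma superpose_eq_owner: "\<exists>x\<^sub>0. \<forall>w. (\<forall>x. w x \<le> 1) \<longrightarrow> superpose w a = \<psi> x\<^sub>0 (w x\<^sub>0) a"
proof -
  obtain x\<^sub>0 where "\<forall>x t. x \<noteq> x\<^sub>0 \<longrightarrow> t \<le> 1 \<longrightarrow> \<psi> x t a = 0"
    using ex_family_owner by blast
  then have "superpose w a = \<psi> x\<^sub>0 (w x\<^sub>0) a" if "\<forall>x. w x \<le> 1" for w
    unfolding superpose_def using that by (subst infsum_single_nonzero[where x = x\<^sub>0]) auto
  then show ?thesis by blast
qed

lemma superpose_nonneg: "(\<And>x. w x \<le> 1) \<Longrightarrow> superpose w a \<ge> 0"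
  unfolding superpose_def by (rule infsum_nonneg) (rule \<psi>_nonneg)

context
  fixes w :: "'a \<Rightarrow> real"
  assumes w_nonneg: "\<And>x. 0 \<le> w x" and w_le_1: "\<And>x. w x \<le> 1" and w_summable: "w summable_on UNIV"
begin

lemma
  shows summable_on_superpose: "superpose w summable_on A"
    and infsum_superpose: "(\<Sum>\<^sub>\<infinity>a\<in>A. superpose w a) = (\<Sum>\<^sub>\<infinity>x. meas (\<psi> x (w x)) A)"
  unfolding superpose_def meas_def
  using summable_on_infsum_nonneg[of "\<lambda>x. \<psi> x (w x)"] infsum_swap_nonneg[of "\<lambda>x. \<psi> x (w x)"]
    w_nonneg w_le_1 w_summable by (simp_all add: \<psi>_nonneg \<psi>_summable \<psi>_mass)

lemma infsum_superpose_UNIV: "(\<Sum>\<^sub>\<infinity>a. superpose w a) = (\<Sum>\<^sub>\<infinity>x. w x)"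
  using infsum_superpose[of UNIV] w_nonneg w_le_1 by (simp add: meas_def \<psi>_mass)

end

definition generated_map :: "'a pmf \<Rightarrow> 'a pmf" where
  "generated_map \<mu> = embed_pmf (superpose (pmf \<mu>))"

lemma pmf_generated_map: "pmf (generated_map \<mu>) = superpose (pmf \<mu>)"
  unfolding generated_map_def
  by (rule pmf_embed_pmf_real)
    (simp_all add: superpose_nonneg pmf_le_1 summable_on_superpose infsum_superpose_UNIV
      summable_on_pmf infsum_pmf_UNIV)

lemma generates_generated_map: "generates \<Phi> generated_map"
  unfolding generates_def
proof (intro allI)
  fix \<mu> A
  have "measure_pmf.prob (generated_map \<mu>) A = (\<Sum>\<^sub>\<infinity>x. meas (\<psi> x (pmf \<mu> x)) A)"
    unfolding measure_pmf_conv_infsum pmf_generated_map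
    by (rule infsum_superpose) (simp_all add: pmf_le_1 summable_on_pmf)
  also have "\<dots> = (\<Sum>\<^sub>\<infinity>x\<in>{x. pmf \<mu> x > 0}. meas (\<psi> x (pmf \<mu> x)) A)"
    by (rule infsum_cong_neutral) (auto simp: \<psi>_def meas_def order.order_iff_strict)
  also have "\<dots> = (\<Sum>\<^sub>\<infinity>x\<in>{x. pmf \<mu> x > 0}. meas (\<Phi> x (pmf \<mu> x)) A)"
    by (rule infsum_cong) (simp add: \<psi>_def)
  finally show "measure_pmf.prob (generated_map \<mu>) A =
      (\<Sum>\<^sub>\<infinity>x\<in>{x. measure_pmf.prob \<mu> {x} > 0}. meas (\<Phi> x (measure_pmf.prob \<mu> {x})) A)"
    by (simp add: measure_pmf_single)
qed

lemma overlap_generated_map: "overlap (generated_map \<mu>) (generated_map \<nu>) = overlap \<mu> \<nu>"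
proof -
  let ?w = "\<lambda>x. min (pmf \<mu> x) (pmf \<nu> x)"
  have "min (superpose (pmf \<mu>) a) (superpose (pmf \<nu>) a) = superpose ?w a" for a
  proof -
    obtain x\<^sub>0 where "\<forall>w. (\<forall>x. w x \<le> 1) \<longrightarrow> superpose w a = \<psi> x\<^sub>0 (w x\<^sub>0) a"
      using superpose_eq_owner by blast
    then show ?thesis by (simp add: pmf_le_1 min_\<psi> min.coboundedI1)
  qed
  then have "overlap (generated_map \<mu>) (generated_map \<nu>) = (\<Sum>\<^sub>\<infinity>a. superpose ?w a)"
    unfolding overlap_def pmf_generated_map by simp
  also have "\<dots> = overlap \<mu> \<nu>"
    unfolding overlap_def
    by (rule infsum_superpose_UNIV) (simp_all add: pmf_le_1 min.coboundedI1 summable_on_min_pmf)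
  finally show ?thesis .
qed

end

lemma admissible_family_generates_isometry:
  assumes "p > 0" "admissible_family \<Phi>"
  shows "\<exists>f. generates \<Phi> f \<and> isometric_embedding p f"
proof -
  interpret admissible \<Phi> by standard (fact assms(2))
  show ?thesis
    using generates_generated_map overlap_generated_map isometric_embedding_iff_overlap[OF assms(1)]
    by blast
qed

section \<open>Uniqueness of the generating family\<close>

definition pmf_with_mass :: "'a \<Rightarrow> real \<Rightarrow> 'a pmf" where
  "pmf_with_mass x t = (SOME \<mu>. pmf \<mu> x = t)"

lemma pmf_pmf_with_mass:
  assumes "y \<noteq> x" "0 \<le> t" "t \<le> 1"
  shows "pmf (pmf_with_mass x t) x = t"
proof -
  have "(\<lambda>b. if b then x else y) -` {x} = {True}" using assms(1) by (auto split: if_splits)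
  then have "pmf (map_pmf (\<lambda>b. if b then x else y) (bernoulli_pmf t)) x = t"
    using assms(2,3) by (simp add: pmf_map measure_pmf_single)
  then show ?thesis unfolding pmf_with_mass_def by (rule someI)
qed

lemma pmf_pmf_with_mass_pmf: "pmf (pmf_with_mass x (pmf \<mu> x)) x = pmf \<mu> x"
  unfolding pmf_with_mass_def by (rule someI) (rule refl)

lemma generates_pmf:
  assumes "generates \<Phi> f"
  shows "pmf (f \<mu>) a = (\<Sum>\<^sub>\<infinity>x\<in>{x. pmf \<mu> x > 0}. \<Phi> x (pmf \<mu> x) a)"
  using assms unfolding generates_def by (simp add: measure_pmf_single[symmetric])

text \<open>block f \<mu> x is f \<mu> restricted to the support of f (return_pmf x); for an isometric
  embedding f it is the paper's \<phi>_{x,\<mu>{x}}.\<close>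
definition block :: "('a pmf \<Rightarrow> 'a pmf) \<Rightarrow> 'a pmf \<Rightarrow> 'a \<Rightarrow> 'a \<Rightarrow> real" where
  "block f \<mu> x a = (if pmf (f (return_pmf x)) a > 0 then pmf (f \<mu>) a else 0)"

definition induced_family :: "('a pmf \<Rightarrow> 'a pmf) \<Rightarrow> 'a \<Rightarrow> real \<Rightarrow> 'a \<Rightarrow> real" where
  "induced_family f x t = block f (pmf_with_mass x t) x"

context admissible
begin

lemma family_eq_induced_family:
  assumes gen: "generates \<Phi> f" and "y \<noteq> x" "0 < t" "t \<le> 1"
  shows "\<Phi> x t = induced_family f x t"
proof
  fix a
  define \<mu> where "\<mu> = pmf_with_mass x t"
  have \<mu>: "pmf \<mu> x = t" unfolding \<mu>_def using assms(2-4) by (simp add: pmf_pmf_with_mass)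
  have "{z. pmf (return_pmf x) z > 0} = {x}" by (auto simp: indicator_def)
  then have return: "pmf (f (return_pmf x)) a = \<Phi> x 1 a"
    using generates_pmf[OF gen, of "return_pmf x"] by simp
  show "\<Phi> x t a = induced_family f x t a"
  proof (cases "\<Phi> x 1 a > 0")
    case True
    have "pmf (f \<mu>) a = \<Phi> x (pmf \<mu> x) a"
      unfolding generates_pmf[OF gen]
    proof (subst infsum_single_nonzero[where x = x])
      fix z assume "z \<in> {z. pmf \<mu> z > 0}" "z \<noteq> x"
      then show "\<Phi> z (pmf \<mu> z) a = 0"
        using family_disjoint[of z x a] True family_eq_0_if_family_1_eq_0[of z a "pmf \<mu> z"]
        by (auto simp: pmf_le_1)
    qed (use \<mu> assms(3) in auto)
    then show ?thesis using True return \<mu> by (simp add: induced_family_def block_def \<mu>_def)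
  next
    case False
    then show ?thesis
      using return family_eq_0_if_family_1_eq_0 family_nonneg[of 1 x a] assms(3,4)
      by (simp add: induced_family_def block_def)
  qed
qed

end

section \<open>Overlap-preserving maps\<close>

locale overlap_preserving =
  fixes f :: "'a pmf \<Rightarrow> 'a pmf"
  assumes overlap_preserved: "overlap (f \<mu>) (f \<nu>) = overlap \<mu> \<nu>"
begin

lemma image_return_pmf_disjoint:
  assumes "x \<noteq> y"
  shows "pmf (f (return_pmf x)) a = 0 \<or> pmf (f (return_pmf y)) a = 0"
proof -
  have "overlap (f (return_pmf x)) (f (return_pmf y)) = 0"
    using assms by (simp add: overlap_preserved overlap_return_pmf)
  then have "min (pmf (f (return_pmf x)) a) (pmf (f (return_pmf y)) a) = 0"
    unfolding overlap_def by (rule nonneg_infsum_le_0D[OF eq_refl summable_on_min_pmf]) auto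
  then show ?thesis by linarith
qed

lemma ex_image_owner: "\<exists>x\<^sub>0. \<forall>x. x \<noteq> x\<^sub>0 \<longrightarrow> pmf (f (return_pmf x)) a = 0"
proof (cases "\<exists>x\<^sub>0. pmf (f (return_pmf x\<^sub>0)) a \<noteq> 0")
  case True
  then show ?thesis using image_return_pmf_disjoint by blast
qed auto

lemma overlap_image_return_pmf: "(\<Sum>\<^sub>\<infinity>a. min (pmf (f \<mu>) a) (pmf (f (return_pmf x)) a)) = pmf \<mu> x"
  using overlap_preserved[of \<mu> "return_pmf x"] overlap_return_pmf[of \<mu> x]
  unfolding overlap_def by simp

text \<open>So f \<mu> is carried by the union of the supports of the f (return_pmf x).  The sum is at most
  pmf (f \<mu>) a because these supports are disjoint, and both sides have total mass 1.\<close>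
lemma pmf_image_eq_infsum_min:
  "pmf (f \<mu>) a = (\<Sum>\<^sub>\<infinity>x. min (pmf (f \<mu>) a) (pmf (f (return_pmf x)) a))"
proof -
  define F where "F x b = min (pmf (f \<mu>) b) (pmf (f (return_pmf x)) b)" for x b
  have row_sums: "(\<lambda>x. \<Sum>\<^sub>\<infinity>b. F x b) summable_on UNIV"
    unfolding F_def overlap_image_return_pmf by (rule summable_on_pmf)
  have le: "(\<Sum>\<^sub>\<infinity>x. F x b) \<le> pmf (f \<mu>) b" for b
  proof -
    obtain x\<^sub>0 where "\<forall>x. x \<noteq> x\<^sub>0 \<longrightarrow> pmf (f (return_pmf x)) b = 0"
      using ex_image_owner by blast
    then have "(\<Sum>\<^sub>\<infinity>x. F x b) = F x\<^sub>0 b"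
      by (subst infsum_single_nonzero[where x = x\<^sub>0]) (auto simp: F_def)
    then show ?thesis by (simp add: F_def)
  qed
  have "(\<Sum>\<^sub>\<infinity>b. \<Sum>\<^sub>\<infinity>x. F x b) = (\<Sum>\<^sub>\<infinity>x. \<Sum>\<^sub>\<infinity>b. F x b)"
    by (rule infsum_swap_nonneg[OF _ _ row_sums]) (auto simp: F_def summable_on_min_pmf)
  also have "\<dots> = (\<Sum>\<^sub>\<infinity>b. pmf (f \<mu>) b)"
    by (simp add: F_def overlap_image_return_pmf infsum_pmf_UNIV)
  finally have total: "(\<Sum>\<^sub>\<infinity>b. \<Sum>\<^sub>\<infinity>x. F x b) = (\<Sum>\<^sub>\<infinity>b. pmf (f \<mu>) b)" .
  have "(\<lambda>b. \<Sum>\<^sub>\<infinity>x. F x b) summable_on UNIV"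
    by (rule summable_on_infsum_nonneg[OF _ _ row_sums]) (auto simp: F_def summable_on_min_pmf)
  then have "(\<Sum>\<^sub>\<infinity>x. F x a) = pmf (f \<mu>) a"
    by (rule eq_if_le_and_infsum_ge[OF _ summable_on_pmf le]) (simp_all only: total order.refl UNIV_I)
  then show ?thesis by (simp add: F_def)
qed

lemma pmf_image_le_image_return_pmf:
  assumes "pmf (f (return_pmf x)) a > 0"
  shows "pmf (f \<mu>) a \<le> pmf (f (return_pmf x)) a"
proof -
  have "\<forall>z. z \<noteq> x \<longrightarrow> pmf (f (return_pmf z)) a = 0"
    using image_return_pmf_disjoint assms by fastforce
  then have "pmf (f \<mu>) a = min (pmf (f \<mu>) a) (pmf (f (return_pmf x)) a)"
    by (subst pmf_image_eq_infsum_min, subst infsum_single_nonzero[where x = x]) auto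
  then show ?thesis by (metis min.cobounded2)
qed

lemma pmf_image_eq_0: "(\<And>x. pmf (f (return_pmf x)) a = 0) \<Longrightarrow> pmf (f \<mu>) a = 0"
  by (subst pmf_image_eq_infsum_min) simp

lemma block_eq_min: "block f \<mu> x a = min (pmf (f \<mu>) a) (pmf (f (return_pmf x)) a)"
proof (cases "pmf (f (return_pmf x)) a > 0")
  case True
  then show ?thesis using pmf_image_le_image_return_pmf[OF True, of \<mu>] by (simp add: block_def)
next
  case False
  then have "pmf (f (return_pmf x)) a = 0" using pmf_nonneg[of "f (return_pmf x)" a] by linarith
  then show ?thesis by (simp add: block_def)
qed

lemma block_nonneg: "block f \<mu> x a \<ge> 0"
  by (simp add: block_def)

lemma block_le: "block f \<mu> x a \<le> pmf (f \<mu>) a"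
  by (simp add: block_def)

lemma summable_on_block: "block f \<mu> x summable_on A"
  by (rule summable_on_comparison_test[OF summable_on_pmf[of "f \<mu>"]]) (auto simp: block_nonneg block_le)

lemma infsum_block: "(\<Sum>\<^sub>\<infinity>a. block f \<mu> x a) = pmf \<mu> x"
  by (simp add: block_eq_min overlap_image_return_pmf)

lemma infsum_block_combine:
  fixes g :: "real \<Rightarrow> real \<Rightarrow> real"
  assumes "g 0 0 = 0"
  shows "(\<Sum>\<^sub>\<infinity>x. g (block f \<mu> x a) (block f \<nu> x a)) = g (pmf (f \<mu>) a) (pmf (f \<nu>) a)"
proof (cases "\<exists>x\<^sub>0. pmf (f (return_pmf x\<^sub>0)) a > 0")
  case True
  then obtain x\<^sub>0 where pos: "pmf (f (return_pmf x\<^sub>0)) a > 0" by blast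
  then have "\<forall>x. x \<noteq> x\<^sub>0 \<longrightarrow> pmf (f (return_pmf x)) a = 0"
    using image_return_pmf_disjoint by fastforce
  with pos show ?thesis
    by (subst infsum_single_nonzero[where x = x\<^sub>0]) (auto simp: block_def assms)
next
  case False
  then have "\<And>x. pmf (f (return_pmf x)) a = 0" by (metis less_eq_real_def pmf_nonneg)
  then show ?thesis using False assms by (simp add: block_def pmf_image_eq_0)
qed

text \<open>Summing the blockwise inequality over x gives overlap (f \<mu>) (f \<nu>) on the left and
  overlap \<mu> \<nu> on the right, so by overlap preservation it is an equality in every block.\<close>
lemma infsum_min_block:
  "(\<Sum>\<^sub>\<infinity>a. min (block f \<mu> x a) (block f \<nu> x a)) = min (pmf \<mu> x) (pmf \<nu> x)"
proof -
  define F where "F x a = min (block f \<mu> x a) (block f \<nu> x a)" for x a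
  have F_nonneg: "F x a \<ge> 0" for x a by (simp add: F_def block_nonneg)
  have F_summable: "F x summable_on UNIV" for x
    by (rule summable_on_comparison_test[OF summable_on_block[of \<mu> x]])
      (auto simp: F_def block_nonneg)
  have le: "(\<Sum>\<^sub>\<infinity>a. F x a) \<le> min (pmf \<mu> x) (pmf \<nu> x)" for x
  proof -
    have "(\<Sum>\<^sub>\<infinity>a. F x a) \<le> (\<Sum>\<^sub>\<infinity>a. block f \<mu> x a)"
      and "(\<Sum>\<^sub>\<infinity>a. F x a) \<le> (\<Sum>\<^sub>\<infinity>a. block f \<nu> x a)"
      by (rule infsum_mono[OF F_summable summable_on_block], simp add: F_def)+
    then show ?thesis by (simp add: infsum_block)
  qed
  have row_sums: "(\<lambda>x. \<Sum>\<^sub>\<infinity>a. F x a) summable_on UNIV"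
    by (rule summable_on_comparison_test[OF summable_on_pmf[of \<mu>]])
      (use le in \<open>auto intro: infsum_nonneg F_nonneg order.trans\<close>)
  have "(\<Sum>\<^sub>\<infinity>x. \<Sum>\<^sub>\<infinity>a. F x a) = (\<Sum>\<^sub>\<infinity>a. \<Sum>\<^sub>\<infinity>x. F x a)"
    by (rule infsum_swap_nonneg[OF F_nonneg F_summable row_sums, symmetric])
  also have "\<dots> = overlap (f \<mu>) (f \<nu>)"
    by (simp add: F_def overlap_def infsum_block_combine)
  also have "\<dots> = (\<Sum>\<^sub>\<infinity>x. min (pmf \<mu> x) (pmf \<nu> x))"
    using overlap_preserved[of \<mu> \<nu>] by (simp only: overlap_def)
  finally have total: "(\<Sum>\<^sub>\<infinity>x. \<Sum>\<^sub>\<infinity>a. F x a) = (\<Sum>\<^sub>\<infinity>x. min (pmf \<mu> x) (pmf \<nu> x))" .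
  have "(\<Sum>\<^sub>\<infinity>a. F x a) = min (pmf \<mu> x) (pmf \<nu> x)"
    by (rule eq_if_le_and_infsum_ge[OF row_sums summable_on_min_pmf le])
      (simp_all only: total order.refl UNIV_I)
  then show ?thesis by (simp add: F_def)
qed

lemma block_mono:
  assumes "pmf \<mu> x \<le> pmf \<nu> x"
  shows "block f \<mu> x a \<le> block f \<nu> x a"
proof -
  have "(\<lambda>a. min (block f \<mu> x a) (block f \<nu> x a)) summable_on UNIV"
    by (rule summable_on_comparison_test[OF summable_on_block[of \<mu> x]]) (auto simp: block_nonneg)
  then have "min (block f \<mu> x a) (block f \<nu> x a) = block f \<mu> x a"
    by (rule eq_if_le_and_infsum_ge[OF _ summable_on_block])
      (use assms in \<open>simp_all add: infsum_min_block infsum_block\<close>)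
  then show ?thesis by (metis min.cobounded2)
qed

lemma induced_family_pmf: "induced_family f x (pmf \<mu> x) = block f \<mu> x"
proof
  fix a
  have "pmf (pmf_with_mass x (pmf \<mu> x)) x = pmf \<mu> x" by (rule pmf_pmf_with_mass_pmf)
  then have "block f (pmf_with_mass x (pmf \<mu> x)) x a \<le> block f \<mu> x a"
    and "block f \<mu> x a \<le> block f (pmf_with_mass x (pmf \<mu> x)) x a"
    by (simp_all add: block_mono)
  then show "induced_family f x (pmf \<mu> x) a = block f \<mu> x a"
    unfolding induced_family_def by (rule order.antisym)
qed

lemma induced_family_generates: "generates (induced_family f) f"
  unfolding generates_def
proof (intro allI)
  fix \<mu> A
  have row_sums: "(\<lambda>x. \<Sum>\<^sub>\<infinity>a. block f \<mu> x a) summable_on UNIV"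
    unfolding infsum_block by (rule summable_on_pmf)
  have "(\<Sum>\<^sub>\<infinity>x\<in>{x. pmf \<mu> x > 0}. meas (induced_family f x (pmf \<mu> x)) A)
      = (\<Sum>\<^sub>\<infinity>x. meas (block f \<mu> x) A)"
  proof (rule infsum_cong_neutral)
    fix x assume "x \<in> UNIV - {x. pmf \<mu> x > 0}"
    then have "pmf \<mu> x = 0" using pmf_nonneg[of \<mu> x] by simp
    then have "block f \<mu> x a = 0" for a
      by (intro nonneg_infsum_le_0D[where A = UNIV])
        (simp_all add: infsum_block summable_on_block block_nonneg)
    then show "meas (block f \<mu> x) A = 0" by (simp add: meas_def)
  qed (simp_all add: induced_family_pmf)
  also have "\<dots> = (\<Sum>\<^sub>\<infinity>a\<in>A. \<Sum>\<^sub>\<infinity>x. block f \<mu> x a)"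
    unfolding meas_def by (rule infsum_swap_nonneg[OF block_nonneg summable_on_block row_sums, symmetric])
  also have "\<dots> = measure_pmf.prob (f \<mu>) A"
    using infsum_block_combine[where g = "\<lambda>u v. u" and \<nu> = \<mu>]
    by (simp add: measure_pmf_conv_infsum)
  finally show "measure_pmf.prob (f \<mu>) A =
      (\<Sum>\<^sub>\<infinity>x\<in>{x. measure_pmf.prob \<mu> {x} > 0}. meas (induced_family f x (measure_pmf.prob \<mu> {x})) A)"
    by (simp add: measure_pmf_single)
qed

lemma induced_family_admissible:
  assumes "\<exists>x y :: 'a. x \<noteq> y"
  shows "admissible_family (induced_family f)"
  unfolding admissible_family_def
proof (intro conjI allI impI ballI)
  have mass: "pmf (pmf_with_mass x t) x = t" if "0 \<le> t" "t \<le> 1" for x :: 'a and t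
  proof -
    obtain u v :: 'a where "u \<noteq> v" using assms by blast
    then obtain y where "y \<noteq> x" by metis
    then show ?thesis using that by (rule pmf_pmf_with_mass)
  qed
  fix x
  show "finite_meas (induced_family f x t)" for t
    by (simp add: finite_meas_def induced_family_def block_nonneg summable_on_block)
  show "meas (induced_family f x t) UNIV = t" if "t \<in> {0<..1}" for t
    using that by (simp add: meas_def induced_family_def infsum_block mass)
  show "meas_le (induced_family f x s) (induced_family f x t)" if "0 < s \<and> s < t \<and> t \<le> 1" for s t
    unfolding meas_le_def meas_def induced_family_def
  proof
    fix A
    show "(\<Sum>\<^sub>\<infinity>a\<in>A. block f (pmf_with_mass x s) x a) \<le> (\<Sum>\<^sub>\<infinity>a\<in>A. block f (pmf_with_mass x t) x a)"
      by (rule infsum_mono[OF summable_on_block summable_on_block], rule block_mono)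
        (use that mass in simp)
  qed
  show "supp (induced_family f x 1) \<inter> supp (induced_family f y 1) = {}" if "x \<noteq> y" for y
  proof -
    have disjoint: "induced_family f x 1 a = 0 \<or> induced_family f y 1 a = 0" for a
      using image_return_pmf_disjoint[OF that, of a] by (auto simp: induced_family_def block_def)
    show ?thesis
    proof (rule equals0I)
      fix a assume "a \<in> supp (induced_family f x 1) \<inter> supp (induced_family f y 1)"
      then have "induced_family f x 1 a > 0" "induced_family f y 1 a > 0" by (simp_all add: supp_def)
      with disjoint[of a] show False by simp
    qed
  qed
qed

end

theorem theorem2p3:
  fixes p :: real
  assumes "p > 0"
    and "\<exists>x y :: 'a :: countable. x \<noteq> y"
  shows "(\<forall>f :: 'a pmf \<Rightarrow> 'a pmf. isometric_embedding p f \<longrightarrow>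
            (\<exists>\<Phi>. admissible_family \<Phi> \<and> generates \<Phi> f \<and>
               (\<forall>\<Psi>. admissible_family \<Psi> \<and> generates \<Psi> f \<longrightarrow>
                  (\<forall>x. \<forall>t\<in>{0<..1}. \<Psi> x t = \<Phi> x t))))
       \<and> (\<forall>\<Phi> :: 'a \<Rightarrow> real \<Rightarrow> 'a \<Rightarrow> real. admissible_family \<Phi> \<longrightarrow>
            (\<exists>f. generates \<Phi> f \<and> isometric_embedding p f))"
proof (intro conjI allI impI)
  fix f :: "'a pmf \<Rightarrow> 'a pmf"
  assume "isometric_embedding p f"
  then interpret overlap_preserving f
    by unfold_locales (simp add: isometric_embedding_iff_overlap[OF assms(1)])
  have "\<Psi> x t = induced_family f x t"
    if "admissible_family \<Psi>" "generates \<Psi> f" "t \<in> {0<..1}" for \<Psi> x t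
  proof -
    obtain u v :: 'a where "u \<noteq> v" using assms(2) by blast
    then obtain y where "y \<noteq> x" by metis
    then show ?thesis
      using admissible.family_eq_induced_family[OF admissible.intro[OF that(1)] that(2)] that(3) by simp
  qed
  then show "\<exists>\<Phi>. admissible_family \<Phi> \<and> generates \<Phi> f \<and>
               (\<forall>\<Psi>. admissible_family \<Psi> \<and> generates \<Psi> f \<longrightarrow>
                  (\<forall>x. \<forall>t\<in>{0<..1}. \<Psi> x t = \<Phi> x t))"
    using induced_family_admissible[OF assms(2)] induced_family_generates by blast
next
  fix \<Phi> :: "'a \<Rightarrow> real \<Rightarrow> 'a \<Rightarrow> real"
  assume "admissible_family \<Phi>"
  then show "\<exists>f. generates \<Phi> f \<and> isometric_embedding p f"
    by (rule admissible_family_generates_isometry[OF assms(1)])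
qed

end
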